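(* Consider $f:\mathbb R^n\to\mathbb R$ convex and continuously differentiable, $A\in\mathbb R^{m\times n}$, $b\in\mathbb R^m$, with nonempty KKT set $\Omega$. Let $\{(x_k,\lambda_k)\}_{k\ge0}$ be generated by the algorithm described in the context (Case I or Case II), write $z_k=(x_k,\lambda_k)$, $\bar z_k=(\bar x_k,\bar\lambda_k)$, and fix $z^*=(x^*,\lambda^* )\in\Omega$. Define, for $k\ge1$, $w_k=\eta(z_k-z^* )+(t_k-1)(z_k-z_{k-1})$ and $B_k=\frac12\|w_k\|_M^2+\frac{\eta(1-\eta)}2\|z_k-z^*\|_M^2$. Then for every $k\ge1$, $B_{k+1}-B_k=-\eta t_{k+1}\langle x_{k+1}-x^*,\,g_{k+1}+\beta A^\top(Ax_{k+1}-b)+A^\top\lambda^*\rangle - t_{k+1}(t_{k+1}-\eta)\langle x_{k+1}-x_k,\,g_{k+1}+\beta A^\top(Ax_{k+1}-b)+A^\top\lambda^*\rangle-(1-\eta)(t_{k+1}-\tfrac12)\|z_{k+1}-z_k\|_M^2-\frac{t_{k+1}^2}{2}\|z_{k+1}-\bar z_k\|_M^2$, where $g_{k+1}=\nabla f(x_{k+1})$ in Case I and $g_{k+1}=\nabla f(\bar x_k)$ in Case II.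
   Context: The KKT set is $\Omega=\{(x^*,\lambda^* ): Ax^*=b,\ \nabla f(x^* )+A^\top\lambda^*=0\}$. For $z=(x,\lambda)$, $\|z\|_M^2=\frac1\gamma\|x\|^2+\frac1\delta\|\lambda\|^2$. Parameter sequence: $\{t_k\}_{k\ge1}$ is nondecreasing, $t_1=1$, $t_k>1$ for all $k>2$, $t_k\to+\infty$, and $t_{k+1}^2-t_k^2\le\rho t_{k+1}$ for all $k\ge 1$, with fixed $\rho\in(0,1]$. Fix $\eta\in[\rho,1]$, $\gamma>0$, $\delta>0$, $\beta\ge0$. Algorithm: initial points $x_0=x_1\in\mathbb R^n$, $\lambda_0=\lambda_1\in\mathbb R^m$. For $k=1,2,\dots$: set $\alpha_k=(t_{k+1}-\eta)/\eta$, $c_k=t_{k+1}/\eta$, $\bar x_k=x_k+\frac{t_k-1}{t_{k+1}}(x_k-x_{k-1})$, $\bar\lambda_k=\lambda_k+\frac{t_k-1}{t_{k+1}}(\lambda_k-\lambda_{k-1})$, $p_k=c_k\bar\lambda_k-\alpha_k\lambda_k$, $r_k=\alpha_kAx_k+b$. Case I ($f$ convex and $C^1$): $x_{k+1}=\arg\min_{x}\{f(x)+\frac\beta2\|Ax-b\|^2+\frac1{2\gamma}\|x-\bar x_k\|^2+\langle p_k,Ax-b\rangle+\frac\delta2\|c_kAx-r_k\|^2\}$. Case II ($f$ convex with $L$-Lipschitz gradient, and $\gamma\le 1/L$): $x_{k+1}=\arg\min_{x}\{\langle\nabla f(\bar x_k),x\rangle+\frac\beta2\|Ax-b\|^2+\frac1{2\gamma}\|x-\bar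 x_k\|^2+\langle p_k,Ax-b\rangle+\frac\delta2\|c_kAx-r_k\|^2\}$. Then $\lambda_{k+1}=\bar\lambda_k+\delta(c_kAx_{k+1}-r_k)$. *)

theory Defs
  imports "HOL-Analysis.Analysis"
begin

definition Mnorm2 :: "real \<Rightarrow> real \<Rightarrow> real^'n \<Rightarrow> real^'m \<Rightarrow> real" where
  "Mnorm2 \<gamma> \<delta> u v = (norm u)^2 / \<gamma> + (norm v)^2 / \<delta>"

definition extrap :: "(nat \<Rightarrow> real) \<Rightarrow> (nat \<Rightarrow> 'a::real_vector) \<Rightarrow> nat \<Rightarrow> 'a" where
  "extrap t x k = x k + ((t k - 1) / t (Suc k)) *\<^sub>R (x k - x (k - 1))"

definition alg_alpha :: "real \<Rightarrow> (nat \<Rightarrow> real) \<Rightarrow> nat \<Rightarrow> real" where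
  "alg_alpha \<eta> t k = (t (Suc k) - \<eta>) / \<eta>"

definition alg_c :: "real \<Rightarrow> (nat \<Rightarrow> real) \<Rightarrow> nat \<Rightarrow> real" where
  "alg_c \<eta> t k = t (Suc k) / \<eta>"

definition alg_p :: "real \<Rightarrow> (nat \<Rightarrow> real) \<Rightarrow> (nat \<Rightarrow> real^'m) \<Rightarrow> nat \<Rightarrow> real^'m" where
  "alg_p \<eta> t lam k = alg_c \<eta> t k *\<^sub>R extrap t lam k - alg_alpha \<eta> t k *\<^sub>R lam k"

definition alg_r :: "real \<Rightarrow> (nat \<Rightarrow> real) \<Rightarrow> real^'n^'m \<Rightarrow> real^'m \<Rightarrow> (nat \<Rightarrow> real^'n) \<Rightarrow> nat \<Rightarrow> real^'m" where
  "alg_r \<eta> t A b x k = alg_alpha \<eta> t k *\<^sub>R (A *v x k) + b"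

text \<open>Objective of the x-subproblem at iteration k; F is f (Case I) or the
  linearization y |-> <grad f(xbar_k), y> (Case II).\<close>
definition alg_obj :: "(real^'n \<Rightarrow> real) \<Rightarrow> real \<Rightarrow> real \<Rightarrow> real \<Rightarrow> real \<Rightarrow> (nat \<Rightarrow> real)
    \<Rightarrow> real^'n^'m \<Rightarrow> real^'m \<Rightarrow> (nat \<Rightarrow> real^'n) \<Rightarrow> (nat \<Rightarrow> real^'m) \<Rightarrow> nat \<Rightarrow> real^'n \<Rightarrow> real" where
  "alg_obj F \<beta> \<gamma> \<delta> \<eta> t A b x lam k y =
     F y + \<beta> / 2 * (norm (A *v y - b))^2 + 1 / (2 * \<gamma>) * (norm (y - extrap t x k))^2
     + alg_p \<eta> t lam k \<bullet> (A *v y - b)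
     + \<delta> / 2 * (norm (alg_c \<eta> t k *\<^sub>R (A *v y) - alg_r \<eta> t A b x k))^2"

definition lyapB :: "real \<Rightarrow> real \<Rightarrow> real \<Rightarrow> (nat \<Rightarrow> real) \<Rightarrow> (nat \<Rightarrow> real^'n) \<Rightarrow> (nat \<Rightarrow> real^'m)
    \<Rightarrow> real^'n \<Rightarrow> real^'m \<Rightarrow> nat \<Rightarrow> real" where
  "lyapB \<gamma> \<delta> \<eta> t x lam xs ls k =
     1/2 * Mnorm2 \<gamma> \<delta> (\<eta> *\<^sub>R (x k - xs) + (t k - 1) *\<^sub>R (x k - x (k - 1)))
                      (\<eta> *\<^sub>R (lam k - ls) + (t k - 1) *\<^sub>R (lam k - lam (k - 1)))
     + \<eta> * (1 - \<eta>) / 2 * Mnorm2 \<gamma> \<delta> (x k - xs) (lam k - ls)"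

end

theory Submission
  imports Defs
begin

text \<open>Write \<open>T = t(k+1)\<close>, \<open>z = (x, \<lambda>)\<close> and \<open>u = \<eta>(z(k+1) - z*) + (T - \<eta>)(z(k+1) - z(k))\<close>.
  Since \<open>(t(k) - 1)(z(k) - z(k-1)) = T(zbar(k) - z(k))\<close>, expanding squares gives, for
  arbitrary sequences, the identity
  \<open>B(k+1) - B(k) = T <z(k+1) - zbar(k), u>_M - (1 - \<eta>)(T - 1/2) |z(k+1) - z(k)|_M^2
    - T^2/2 |z(k+1) - zbar(k)|_M^2\<close>.
  The algorithm enters only through the cross term: testing the first-order optimality
  condition of the x-subproblem with the primal part \<open>u_x\<close> of \<open>u\<close>, and rewriting the
  dual terms by the multiplier update and \<open>A x* = b\<close>, gives
  \<open><z(k+1) - zbar(k), u>_M = -<v, u_x>\<close>.\<close>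

definition energy :: "real \<Rightarrow> 'a::real_inner \<Rightarrow> 'a \<Rightarrow> real" where
  "energy \<eta> a w = 1/2 * (norm w)^2 + \<eta> * (1 - \<eta>) / 2 * (norm a)^2"

lemma energy_step_identity:
  fixes a e q :: "'a::real_inner"
  shows "energy \<eta> a (\<eta> *\<^sub>R a + (T - 1) *\<^sub>R (a - e)) - energy \<eta> e (\<eta> *\<^sub>R e + T *\<^sub>R q)
       = T * ((a - e - q) \<bullet> (\<eta> *\<^sub>R a + (T - \<eta>) *\<^sub>R (a - e)))
         - (1 - \<eta>) * (T - 1/2) * (norm (a - e))^2 - T^2 / 2 * (norm (a - e - q))^2"
  unfolding energy_def power2_norm_eq_inner
  by (simp add: inner_commute algebra_simps power2_eq_square) (simp add: field_simps)

lemma lyapB_eq_energy: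
  "lyapB \<gamma> \<delta> \<eta> t x lam xs ls k
     = energy \<eta> (x k - xs) (\<eta> *\<^sub>R (x k - xs) + (t k - 1) *\<^sub>R (x k - x (k - 1))) / \<gamma>
     + energy \<eta> (lam k - ls) (\<eta> *\<^sub>R (lam k - ls) + (t k - 1) *\<^sub>R (lam k - lam (k - 1))) / \<delta>"
  unfolding lyapB_def Mnorm2_def energy_def divide_inverse by (simp add: algebra_simps)

lemma extrap_momentum:
  assumes "t (Suc k) \<noteq> 0"
  shows "(t k - 1) *\<^sub>R (x k - x (k - 1)) = t (Suc k) *\<^sub>R (extrap t x k - x k)"
  using assms by (simp add: extrap_def)

lemma energy_Suc_diff:
  fixes x :: "nat \<Rightarrow> 'a::real_inner"
  assumes "t (Suc k) \<noteq> 0"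
  shows "energy \<eta> (x (Suc k) - z) (\<eta> *\<^sub>R (x (Suc k) - z) + (t (Suc k) - 1) *\<^sub>R (x (Suc k) - x k))
         - energy \<eta> (x k - z) (\<eta> *\<^sub>R (x k - z) + (t k - 1) *\<^sub>R (x k - x (k - 1)))
       = t (Suc k) * ((x (Suc k) - extrap t x k) \<bullet>
             (\<eta> *\<^sub>R (x (Suc k) - z) + (t (Suc k) - \<eta>) *\<^sub>R (x (Suc k) - x k)))
         - (1 - \<eta>) * (t (Suc k) - 1/2) * (norm (x (Suc k) - x k))^2
         - t (Suc k)^2 / 2 * (norm (x (Suc k) - extrap t x k))^2"
proof -
  have "x (Suc k) - z - (x k - z) = x (Suc k) - x k"
    and "x (Suc k) - z - (x k - z) - (extrap t x k - x k) = x (Suc k) - extrap t x k"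
    by (simp_all add: algebra_simps)
  then show ?thesis
    using energy_step_identity[of \<eta> "x (Suc k) - z" "t (Suc k)" "x k - z" "extrap t x k - x k"]
    unfolding extrap_momentum[where t=t and k=k, OF assms] by simp
qed

lemma lyapB_Suc_diff:
  assumes "t (Suc k) \<noteq> 0"
  shows "lyapB \<gamma> \<delta> \<eta> t x lam xs ls (Suc k) - lyapB \<gamma> \<delta> \<eta> t x lam xs ls k
    = t (Suc k) * ((x (Suc k) - extrap t x k) \<bullet>
                      (\<eta> *\<^sub>R (x (Suc k) - xs) + (t (Suc k) - \<eta>) *\<^sub>R (x (Suc k) - x k)) / \<gamma>
                 + (lam (Suc k) - extrap t lam k) \<bullet>
                      (\<eta> *\<^sub>R (lam (Suc k) - ls) + (t (Suc k) - \<eta>) *\<^sub>R (lam (Suc k) - lam k)) / \<delta>)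
      - (1 - \<eta>) * (t (Suc k) - 1/2) * Mnorm2 \<gamma> \<delta> (x (Suc k) - x k) (lam (Suc k) - lam k)
      - t (Suc k)^2 / 2 * Mnorm2 \<gamma> \<delta> (x (Suc k) - extrap t x k) (lam (Suc k) - extrap t lam k)"
proof -
  \<comment> \<open>Over abstract reals, so that no vector expression inside a norm gets expanded.\<close>
  have weighted: "(T * I1 - c * N1 - d * M1) / \<gamma> + (T * I2 - c * N2 - d * M2) / \<delta>
      = T * (I1 / \<gamma> + I2 / \<delta>) - c * (N1 / \<gamma> + N2 / \<delta>) - d * (M1 / \<gamma> + M2 / \<delta>)"
    for T c d I1 I2 N1 N2 M1 M2 :: real
    by (simp add: divide_inverse algebra_simps)
  show ?thesis
    unfolding lyapB_eq_energy diff_Suc_1 add_diff_add diff_divide_distrib[symmetric]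
      energy_Suc_diff[where t=t and k=k and x=x and z=xs, OF assms]
      energy_Suc_diff[where t=t and k=k and x=lam and z=ls, OF assms] Mnorm2_def
    by (rule weighted)
qed

lemma inner_transpose_matrix_vector:
  fixes A :: "real^'n^'m"
  shows "h \<bullet> (transpose A *v w) = (A *v h) \<bullet> w"
  by (metis dot_lmul_matrix inner_commute transpose_matrix_vector)

lemma alg_obj_has_derivative:
  fixes A :: "real^'n^'m"
  assumes "(F has_derivative (\<lambda>h. g \<bullet> h)) (at y)"
  shows "(alg_obj F \<beta> \<gamma> \<delta> \<eta> t A b x lam k has_derivative
     (\<lambda>h. g \<bullet> h + \<beta> * ((A *v y - b) \<bullet> (A *v h)) + (y - extrap t x k) \<bullet> h / \<gamma>
        + alg_p \<eta> t lam k \<bullet> (A *v h)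
        + \<delta> * ((alg_c \<eta> t k *\<^sub>R (A *v y) - alg_r \<eta> t A b x k) \<bullet> (alg_c \<eta> t k *\<^sub>R (A *v h))))) (at y)"
  unfolding alg_obj_def power2_norm_eq_inner
  by (rule has_derivative_eq_rhs, (rule derivative_eq_intros assms
      bounded_linear.has_derivative[OF matrix_vector_mul_bounded_linear] | simp)+)
     (auto simp: inner_commute algebra_simps divide_simps)

lemma alg_p_add_step_eq:
  assumes "\<eta> \<noteq> 0"
  shows "alg_p \<eta> t lam k + alg_c \<eta> t k *\<^sub>R (l - extrap t lam k)
       = ls + (1 / \<eta>) *\<^sub>R (\<eta> *\<^sub>R (l - ls) + (t (Suc k) - \<eta>) *\<^sub>R (l - lam k))"
  using assms unfolding alg_p_def alg_c_def alg_alpha_def by (simp add: vec_eq_iff field_simps)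

lemma alg_multiplier_step:
  fixes A :: "real^'n^'m"
  assumes lam_step: "lam (Suc k) = extrap t lam k
          + \<delta> *\<^sub>R (alg_c \<eta> t k *\<^sub>R (A *v x (Suc k)) - alg_r \<eta> t A b x k)"
    and feasible: "A *v xs = b" and "\<eta> \<noteq> 0"
  shows "lam (Suc k) - extrap t lam k
       = (\<delta> / \<eta>) *\<^sub>R (A *v (\<eta> *\<^sub>R (x (Suc k) - xs) + (t (Suc k) - \<eta>) *\<^sub>R (x (Suc k) - x k)))"
  using assms unfolding alg_c_def alg_r_def alg_alpha_def
  by (simp add: matrix_vector_right_distrib matrix_vector_mult_scaleR
      matrix_vector_mult_diff_distrib vec_eq_iff field_simps)

lemma alg_step_cross_term_eq:
  fixes A :: "real^'n^'m" and ls :: "real^'m"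
  assumes min: "\<And>y. alg_obj F \<beta> \<gamma> \<delta> \<eta> t A b x lam k (x (Suc k))
                    \<le> alg_obj F \<beta> \<gamma> \<delta> \<eta> t A b x lam k y"
    and dF: "(F has_derivative (\<lambda>h. g \<bullet> h)) (at (x (Suc k)))"
    and lam_step: "lam (Suc k) = extrap t lam k
          + \<delta> *\<^sub>R (alg_c \<eta> t k *\<^sub>R (A *v x (Suc k)) - alg_r \<eta> t A b x k)"
    and feasible: "A *v xs = b" and "\<eta> \<noteq> 0" "\<delta> \<noteq> 0"
  defines "ux \<equiv> \<eta> *\<^sub>R (x (Suc k) - xs) + (t (Suc k) - \<eta>) *\<^sub>R (x (Suc k) - x k)"
    and "ul \<equiv> \<eta> *\<^sub>R (lam (Suc k) - ls) + (t (Suc k) - \<eta>) *\<^sub>R (lam (Suc k) - lam k)"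
  shows "(x (Suc k) - extrap t x k) \<bullet> ux / \<gamma> + (lam (Suc k) - extrap t lam k) \<bullet> ul / \<delta>
       = - ((g + \<beta> *\<^sub>R (transpose A *v (A *v x (Suc k) - b)) + transpose A *v ls) \<bullet> ux)"
proof -
  define c p r where "c = alg_c \<eta> t k" and "p = alg_p \<eta> t lam k" and "r = alg_r \<eta> t A b x k"
  define dl where "dl = lam (Suc k) - extrap t lam k"
  have stationary: "g \<bullet> ux + \<beta> * ((A *v x (Suc k) - b) \<bullet> (A *v ux))
      + (x (Suc k) - extrap t x k) \<bullet> ux / \<gamma>
      + p \<bullet> (A *v ux) + \<delta> * ((c *\<^sub>R (A *v x (Suc k)) - r) \<bullet> (c *\<^sub>R (A *v ux))) = 0"
    using has_derivative_local_min[OF alg_obj_has_derivative[OF dF] always_eventually] min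
    unfolding c_def p_def r_def by metis
  have dl_eq: "dl = \<delta> *\<^sub>R (c *\<^sub>R (A *v x (Suc k)) - r)"
    using lam_step unfolding dl_def c_def r_def by simp
  have "p \<bullet> (A *v ux) + \<delta> * ((c *\<^sub>R (A *v x (Suc k)) - r) \<bullet> (c *\<^sub>R (A *v ux)))
      = (p + c *\<^sub>R dl) \<bullet> (A *v ux)"
    unfolding dl_eq by (simp add: inner_add_left algebra_simps)
  also have "\<dots> = (ls + (1 / \<eta>) *\<^sub>R ul) \<bullet> (A *v ux)"
    unfolding dl_def c_def p_def ul_def alg_p_add_step_eq[OF \<open>\<eta> \<noteq> 0\<close>, where ls=ls] ..
  also have "\<dots> = ls \<bullet> (A *v ux) + dl \<bullet> ul / \<delta>"
    using alg_multiplier_step[OF lam_step feasible \<open>\<eta> \<noteq> 0\<close>] \<open>\<eta> \<noteq> 0\<close> \<open>\<delta> \<noteq> 0\<close>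
    unfolding dl_def ux_def by (simp add: inner_add_left inner_commute)
  finally have dual: "p \<bullet> (A *v ux) + \<delta> * ((c *\<^sub>R (A *v x (Suc k)) - r) \<bullet> (c *\<^sub>R (A *v ux)))
      = ls \<bullet> (A *v ux) + dl \<bullet> ul / \<delta>" .
  have adjoint: "(g + \<beta> *\<^sub>R (transpose A *v (A *v x (Suc k) - b)) + transpose A *v ls) \<bullet> ux
      = g \<bullet> ux + \<beta> * ((A *v x (Suc k) - b) \<bullet> (A *v ux)) + ls \<bullet> (A *v ux)"
    by (simp add: inner_add_right inner_commute[of _ ux] inner_transpose_matrix_vector
        inner_commute[of "A *v ux"] del: transpose_matrix_vector)
  show ?thesis
    using stationary dual adjoint unfolding dl_def by linarith
qed

lemma lyapB_Suc_diff_alg: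
  fixes A :: "real^'n^'m" and ls :: "real^'m"
  assumes "\<And>y. alg_obj F \<beta> \<gamma> \<delta> \<eta> t A b x lam k (x (Suc k))
                \<le> alg_obj F \<beta> \<gamma> \<delta> \<eta> t A b x lam k y"
    and "(F has_derivative (\<lambda>h. g \<bullet> h)) (at (x (Suc k)))"
    and "lam (Suc k) = extrap t lam k
          + \<delta> *\<^sub>R (alg_c \<eta> t k *\<^sub>R (A *v x (Suc k)) - alg_r \<eta> t A b x k)"
    and "A *v xs = b" and "\<eta> \<noteq> 0" "\<delta> \<noteq> 0" "t (Suc k) \<noteq> 0"
  defines "v \<equiv> g + \<beta> *\<^sub>R (transpose A *v (A *v x (Suc k) - b)) + transpose A *v ls"
  shows "lyapB \<gamma> \<delta> \<eta> t x lam xs ls (Suc k) - lyapB \<gamma> \<delta> \<eta> t x lam xs ls k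
        = - \<eta> * t (Suc k) * ((x (Suc k) - xs) \<bullet> v)
          - t (Suc k) * (t (Suc k) - \<eta>) * ((x (Suc k) - x k) \<bullet> v)
          - (1 - \<eta>) * (t (Suc k) - 1/2) * Mnorm2 \<gamma> \<delta> (x (Suc k) - x k) (lam (Suc k) - lam k)
          - (t (Suc k))^2 / 2 * Mnorm2 \<gamma> \<delta> (x (Suc k) - extrap t x k) (lam (Suc k) - extrap t lam k)"
proof -
  from alg_step_cross_term_eq[OF assms(1-6), where ls = ls, folded v_def]
  have cross: "(x (Suc k) - extrap t x k) \<bullet> (\<eta> *\<^sub>R (x (Suc k) - xs) + (t (Suc k) - \<eta>) *\<^sub>R (x (Suc k) - x k)) / \<gamma>
      + (lam (Suc k) - extrap t lam k) \<bullet> (\<eta> *\<^sub>R (lam (Suc k) - ls) + (t (Suc k) - \<eta>) *\<^sub>R (lam (Suc k) - lam k)) / \<delta>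
      = - (\<eta> * ((x (Suc k) - xs) \<bullet> v) + (t (Suc k) - \<eta>) * ((x (Suc k) - x k) \<bullet> v))"
    by (simp add: inner_add_right inner_commute[of v])
  then show ?thesis
    unfolding lyapB_Suc_diff[where t=t and k=k, OF \<open>t (Suc k) \<noteq> 0\<close>] cross
    by (simp add: algebra_simps)
qed

theorem lemma3p1:
  fixes f :: "real^'n \<Rightarrow> real" and grad :: "real^'n \<Rightarrow> real^'n"
    and A :: "real^'n^'m" and b :: "real^'m"
    and t :: "nat \<Rightarrow> real" and \<rho> \<eta> \<gamma> \<delta> \<beta> L :: real
    and x :: "nat \<Rightarrow> real^'n" and lam :: "nat \<Rightarrow> real^'m"
    and xs :: "real^'n" and ls :: "real^'m"
    and caseII :: bool
  assumes f_convex: "convex_on UNIV f"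
    and f_grad: "\<And>y. (f has_derivative (\<lambda>h. grad y \<bullet> h)) (at y)"
    and grad_cont: "continuous_on UNIV grad"
    and caseII_lip: "caseII \<Longrightarrow> L > 0 \<and> L-lipschitz_on UNIV grad \<and> \<gamma> \<le> 1 / L"
    and KKT: "A *v xs = b" "grad xs + transpose A *v ls = 0"
    and t_one: "t 1 = 1"
    and t_mono: "\<And>k. k \<ge> 1 \<Longrightarrow> t k \<le> t (Suc k)"
    and t_gt1: "\<And>k. k > 2 \<Longrightarrow> t k > 1"
    and t_lim: "filterlim t at_top sequentially"
    and t_growth: "\<And>k. k \<ge> 1 \<Longrightarrow> (t (Suc k))^2 - (t k)^2 \<le> \<rho> * t (Suc k)"
    and rho: "0 < \<rho>" "\<rho> \<le> 1"
    and eta: "\<rho> \<le> \<eta>" "\<eta> \<le> 1"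
    and gamma: "\<gamma> > 0" and delta: "\<delta> > 0" and beta: "\<beta> \<ge> 0"
    and init: "x 0 = x 1" "lam 0 = lam 1"
    and x_step: "\<And>k y. k \<ge> 1 \<Longrightarrow>
        alg_obj (if caseII then (\<lambda>u. grad (extrap t x k) \<bullet> u) else f)
                \<beta> \<gamma> \<delta> \<eta> t A b x lam k (x (Suc k))
        \<le> alg_obj (if caseII then (\<lambda>u. grad (extrap t x k) \<bullet> u) else f)
                \<beta> \<gamma> \<delta> \<eta> t A b x lam k y"
    and lam_step: "\<And>k. k \<ge> 1 \<Longrightarrow>
        lam (Suc k) = extrap t lam k
          + \<delta> *\<^sub>R (alg_c \<eta> t k *\<^sub>R (A *v x (Suc k)) - alg_r \<eta> t A b x k)"
  shows "\<forall>k\<ge>1.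
    (let g = (if caseII then grad (extrap t x k) else grad (x (Suc k)));
         v = g + \<beta> *\<^sub>R (transpose A *v (A *v x (Suc k) - b)) + transpose A *v ls
     in lyapB \<gamma> \<delta> \<eta> t x lam xs ls (Suc k) - lyapB \<gamma> \<delta> \<eta> t x lam xs ls k
        = - \<eta> * t (Suc k) * ((x (Suc k) - xs) \<bullet> v)
          - t (Suc k) * (t (Suc k) - \<eta>) * ((x (Suc k) - x k) \<bullet> v)
          - (1 - \<eta>) * (t (Suc k) - 1/2) * Mnorm2 \<gamma> \<delta> (x (Suc k) - x k) (lam (Suc k) - lam k)
          - (t (Suc k))^2 / 2 * Mnorm2 \<gamma> \<delta> (x (Suc k) - extrap t x k) (lam (Suc k) - extrap t lam k))"
proof -
  have t_ge_1: "t k \<ge> 1" if "k \<ge> 1" for k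
    using that by (induction rule: dec_induct) (use t_one t_mono in force)+
  have t_Suc_nonzero: "t (Suc k) \<noteq> 0" for k
    using t_ge_1[of "Suc k"] by simp
  have "\<eta> \<noteq> 0" "\<delta> \<noteq> 0" using rho eta delta by auto
  have "((if caseII then (\<lambda>u. grad (extrap t x k) \<bullet> u) else f) has_derivative
          (\<lambda>h. (if caseII then grad (extrap t x k) else grad (x (Suc k))) \<bullet> h)) (at (x (Suc k)))" for k
    using f_grad by (cases caseII) (simp_all add: bounded_linear_imp_has_derivative bounded_linear_inner_right)
  from lyapB_Suc_diff_alg[OF x_step this lam_step KKT(1) \<open>\<eta> \<noteq> 0\<close> \<open>\<delta> \<noteq> 0\<close> t_Suc_nonzero]
  show ?thesis by (simp add: Let_def)
qed

end
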